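(* Let $(Q,\rightarrow)$ be a finite transition system, $\mathscr{R}$ a preorder on $Q$ and $\mathscr{P}\subseteq\mathscr{R}$ an equivalence relation with a representative $E.\mathrm{rep}\in E$ fixed for each block $E$ of $\mathscr{P}$, such that there is no pair of a block $E$ of $\mathscr{P}$ and a block $B$ of $\mathscr{R}$ with $E\rightarrow B$ and $\mathrm{RelCount}_{(\mathscr{P},\mathscr{R})}(E,B)=0$. Let $E$ be a block of $\mathscr{P}$ and $B$ a block of $\mathscr{R}$ with $E\rightarrow B$. Then $E.\mathrm{rep}\in\rightarrow_{\mathscr{R}}^{-1}(\mathscr{R}(B))$, i.e. there is $q$ with $E.\mathrm{rep}\rightarrow_{\mathscr{R}} q$ and $B\,\mathscr{R}\,q$.
   Context: A preorder is a reflexive transitive relation; its blocks are $[q]_{\mathscr{R}}=\{q'\mid q\,\mathscr{R}\,q'\wedge q'\,\mathscr{R}\,q\}$. For sets, $X\rightarrow Y$ means some $x\in X,y\in Y$ have $x\rightarrow y$; $X\,\mathscr{R}\,Y$ means $(X\times Y)\cap\mathscr{R}\ne\emptyset$. $\mathrm{RelCount}_{(\mathscr{P},\mathscr{R})}(E,B)=|\{E'\text{ block of }\mathscr{P}\mid E.\mathrm{rep}\rightarrow E'\wedge B\,\mathscr{R}\,E'\}|$. A transition $q\rightarrow q'$ is $\mathscr{R}$-maximal, $q\rightarrow_{\mathscr{R}}q'$, if for all $q''$, ($q\rightarrow q''$ and $q'\,\mathscr{R}\,q''$) implies $q''\in[q']_{\mathscr{R}}$. *)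

theory Defs
  imports Main
begin

definition rblock :: "('a \<times> 'a) set \<Rightarrow> 'a \<Rightarrow> 'a set" where
  "rblock R q = {q'. (q, q') \<in> R \<and> (q', q) \<in> R}"

definition rblocks :: "'a set \<Rightarrow> ('a \<times> 'a) set \<Rightarrow> 'a set set" where
  "rblocks Q R = {rblock R q | q. q \<in> Q}"

definition set_trans :: "('a \<times> 'a) set \<Rightarrow> 'a set \<Rightarrow> 'a set \<Rightarrow> bool" where
  "set_trans T X Y \<longleftrightarrow> (\<exists>x\<in>X. \<exists>y\<in>Y. (x, y) \<in> T)"

definition set_rel :: "('a \<times> 'a) set \<Rightarrow> 'a set \<Rightarrow> 'a set \<Rightarrow> bool" where
  "set_rel R X Y \<longleftrightarrow> (X \<times> Y) \<inter> R \<noteq> {}"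

definition RelCount ::
  "'a set \<Rightarrow> ('a \<times> 'a) set \<Rightarrow> ('a set \<Rightarrow> 'a) \<Rightarrow> ('a \<times> 'a) set \<Rightarrow> ('a \<times> 'a) set
     \<Rightarrow> 'a set \<Rightarrow> 'a set \<Rightarrow> nat" where
  "RelCount Q T rep P R E B =
     card {E' \<in> Q // P. set_trans T {rep E} E' \<and> set_rel R B E'}"

definition max_trans :: "('a \<times> 'a) set \<Rightarrow> ('a \<times> 'a) set \<Rightarrow> 'a \<Rightarrow> 'a \<Rightarrow> bool" where
  "max_trans T R q q' \<longleftrightarrow> (q, q') \<in> T \<and>
     (\<forall>q''. (q, q'') \<in> T \<and> (q', q'') \<in> R \<longrightarrow> q'' \<in> rblock R q')"

end

theory Submission
  imports Defs
begin

text \<open>A non-zero RelCount yields a block E' reached from the representative and related to B;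
  since P is contained in R, the particular target of the transition is itself related to B.
  Among the finitely many successors of the representative, one that is R-maximal above this
  target is reached by an R-maximal transition, and it stays related to B by transitivity.\<close>

lemma set_rel_singleton_iff: "set_rel R B {q} \<longleftrightarrow> (\<exists>b\<in>B. (b, q) \<in> R)"
  unfolding set_rel_def by blast

lemma finite_preorder_has_maximal_above:
  assumes "finite S" and "x \<in> S" and "trans R" and "\<forall>y\<in>S. (y, y) \<in> R"
  shows "\<exists>m\<in>S. (x, m) \<in> R \<and> (\<forall>y\<in>S. (m, y) \<in> R \<longrightarrow> (y, m) \<in> R)"
proof -
  define up where "up m = {y \<in> S. (m, y) \<in> R}" for m
  have finite_up: "finite (up m)" for m
    using \<open>finite S\<close> unfolding up_def by simp
  obtain m where m: "m \<in> S" "(x, m) \<in> R"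
    and least: "\<And>y. y \<in> S \<Longrightarrow> (x, y) \<in> R \<Longrightarrow> card (up m) \<le> card (up y)"
    using ex_has_least_nat[of "\<lambda>y. y \<in> S \<and> (x, y) \<in> R" x "\<lambda>y. card (up y)"] assms(2,4)
    by blast
  have "(y, m) \<in> R" if "y \<in> S" "(m, y) \<in> R" for y
  proof (rule ccontr)
    assume "(y, m) \<notin> R"
    then have "up y \<subset> up m"
      using that m(1) assms(3,4) unfolding up_def by (auto dest: transD)
    then have "card (up y) < card (up m)"
      using finite_up by (simp add: psubset_card_mono)
    moreover have "(x, y) \<in> R"
      using m(2) that(2) assms(3) by (meson transD)
    ultimately show False
      using least[OF that(1)] by simp
  qed
  with m show ?thesis by blast
qed

lemma ex_max_trans_above:
  assumes "finite {q'. (q, q') \<in> T}" and "(q, q0) \<in> T" and "trans R"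
    and "\<forall>q'. (q, q') \<in> T \<longrightarrow> (q', q') \<in> R"
  shows "\<exists>m. max_trans T R q m \<and> (q0, m) \<in> R"
proof -
  obtain m where "(q, m) \<in> T" "(q0, m) \<in> R"
    and maximal: "\<forall>y. (q, y) \<in> T \<longrightarrow> (m, y) \<in> R \<longrightarrow> (y, m) \<in> R"
    using finite_preorder_has_maximal_above[of "{q'. (q, q') \<in> T}" q0 R] assms by auto
  then have "max_trans T R q m"
    unfolding max_trans_def rblock_def by blast
  with \<open>(q0, m) \<in> R\<close> show ?thesis by blast
qed

lemma RelCount_nonzero_ex_related_successor:
  assumes "equiv Q P" and "P \<subseteq> R" and "trans R"
    and "RelCount Q T rep P R E B \<noteq> 0"
  shows "\<exists>q0. (rep E, q0) \<in> T \<and> set_rel R B {q0}"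
proof -
  obtain E' where E': "E' \<in> Q // P" "set_trans T {rep E} E'" "set_rel R B E'"
    using assms(4) unfolding RelCount_def by (metis (no_types, lifting) card.empty empty_Collect_eq)
  obtain q0 where q0: "q0 \<in> E'" "(rep E, q0) \<in> T"
    using E'(2) unfolding set_trans_def by auto
  obtain b e where "b \<in> B" "e \<in> E'" "(b, e) \<in> R"
    using E'(3) unfolding set_rel_def by auto
  moreover have "(e, q0) \<in> R"
    using E'(1) q0(1) \<open>e \<in> E'\<close> assms(1,2) by (metis quotient_eq_iff subsetD)
  ultimately have "(b, q0) \<in> R"
    using assms(3) by (meson transD)
  with q0(2) \<open>b \<in> B\<close> show ?thesis
    unfolding set_rel_singleton_iff by blast
qed

theorem lemma4:
  fixes Q :: "'a set" and T R P :: "('a \<times> 'a) set" and rep :: "'a set \<Rightarrow> 'a"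
  assumes "finite Q"
    and "T \<subseteq> Q \<times> Q"
    and "refl_on Q R" and "trans R"
    and "equiv Q P" and "P \<subseteq> R"
    and "\<forall>E \<in> Q // P. rep E \<in> E"
    and "\<not> (\<exists>E \<in> Q // P. \<exists>B \<in> rblocks Q R.
             set_trans T E B \<and> RelCount Q T rep P R E B = 0)"
    and "E \<in> Q // P" and "B \<in> rblocks Q R" and "set_trans T E B"
  shows "\<exists>q. max_trans T R (rep E) q \<and> set_rel R B {q}"
proof -
  have "RelCount Q T rep P R E B \<noteq> 0"
    using assms(8-11) by metis
  then obtain q0 where "(rep E, q0) \<in> T" and "set_rel R B {q0}"
    using RelCount_nonzero_ex_related_successor assms(4-6) by blast
  moreover have "finite {q'. (rep E, q') \<in> T}"
    using assms(1,2) by (auto intro: finite_subset)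
  moreover have "\<forall>q'. (rep E, q') \<in> T \<longrightarrow> (q', q') \<in> R"
    using assms(2,3) unfolding refl_on_def by auto
  ultimately obtain m where "max_trans T R (rep E) m" "(q0, m) \<in> R"
    using ex_max_trans_above assms(4) by metis
  moreover have "set_rel R B {m}"
    using \<open>set_rel R B {q0}\<close> \<open>(q0, m) \<in> R\<close> assms(4)
    unfolding set_rel_singleton_iff by (meson transD)
  ultimately show ?thesis by blast
qed

end
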